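(* For $t\ge t_0$ let $\mathcal S^t:=\{f\in\Omega:\forall s\in(0,t): f(-s)-f(-t)>b+c_2t-c_1s\}$. Then, with closures taken in $\Omega$, $$\overline{\mathcal S^t}=\{f\in\Omega:\ \forall s\in(0,t):\ f(-s)-f(-t)\ge b+c_2t-c_1s\},\qquad \overline{\mathcal S}=\bigcup_{t\ge t_0}\overline{\mathcal S^t}.$$
   Context: $\Omega$ is the set of continuous $\omega:\mathbb R\to\mathbb R$ with $\omega(0)=0$ and $\omega(t)/(1+|t|)\to0$ as $t\to\pm\infty$, with norm $\|\omega\|_\Omega:=\sup_{t\in\mathbb R}|\omega(t)|/(1+|t|)$. Fix $b>0$, $c_1>c_2>0$, $t_0:=b/(c_1-c_2)$, and $$\mathcal S:=\{f\in\Omega:\ \exists t>t_0\ \forall s\in(0,t):\ f(-s)-f(-t)>b+c_2t-c_1s\}=\bigcup_{t>t_0}\mathcal S^t.$$ *)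

theory Defs
  imports "HOL-Analysis.Analysis"
begin

definition Omega :: "(real \<Rightarrow> real) set" where
  "Omega = {w. continuous_on UNIV w \<and> w 0 = 0 \<and>
     ((\<lambda>t. w t / (1 + \<bar>t\<bar>)) \<longlongrightarrow> 0) at_top \<and>
     ((\<lambda>t. w t / (1 + \<bar>t\<bar>)) \<longlongrightarrow> 0) at_bot}"

definition omega_norm :: "(real \<Rightarrow> real) \<Rightarrow> real" where
  "omega_norm w = (SUP t. \<bar>w t\<bar> / (1 + \<bar>t\<bar>))"

definition omega_closure :: "(real \<Rightarrow> real) set \<Rightarrow> (real \<Rightarrow> real) set" where
  "omega_closure A = {f \<in> Omega. \<forall>e>0. \<exists>g\<in>A. omega_norm (\<lambda>x. f x - g x) < e}"

definition S_t :: "real \<Rightarrow> real \<Rightarrow> real \<Rightarrow> real \<Rightarrow> (real \<Rightarrow> real) set" where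
  "S_t b c1 c2 t = {f \<in> Omega. \<forall>s\<in>{0<..<t}. f (-s) - f (-t) > b + c2 * t - c1 * s}"

definition t_zero :: "real \<Rightarrow> real \<Rightarrow> real \<Rightarrow> real" where
  "t_zero b c1 c2 = b / (c1 - c2)"

definition S_set :: "real \<Rightarrow> real \<Rightarrow> real \<Rightarrow> (real \<Rightarrow> real) set" where
  "S_set b c1 c2 = (\<Union>t\<in>{t_zero b c1 c2<..}. S_t b c1 c2 t)"

end

(*
  Membership in the closure of S^t is a condition on finitely many point values, and
  convergence in Omega implies locally uniform convergence, so the non-strict inequalities
  pass to the limit; conversely, subtracting a small multiple of min(|x|, |t|) from f makes
  them strict.  For the union S, if g in S^T approximates a fixed f in Omega, then g(-T)
  lies below g(-s0) by roughly c2 T, while f(-T) = o(T); hence the parameters T of a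
  sequence of approximants stay bounded, and a convergent subsequence places f in the
  closure of some S^t with t >= t0.  Finally the closure of S^t0 lies in the closure of S:
  since b = (c1 - c2) t0, replacing f on [-t0 - h, -t0] by the line of slope c1 through
  (-t0, f(-t0)) yields an element of S^(t0 + h) uniformly close to f.
*)
theory Submission
  imports Defs
begin

lemma Omega_iff:
  "w \<in> Omega \<longleftrightarrow> continuous_on UNIV w \<and> w 0 = 0 \<and>
     ((\<lambda>t. w t / (1 + \<bar>t\<bar>)) \<longlongrightarrow> 0) at_infinity"
  by (auto simp: Omega_def at_infinity_eq_at_top_bot filterlim_def filtermap_sup)

lemma Omega_weighted_bounded:
  assumes "w \<in> Omega"
  shows "bdd_above (range (\<lambda>t. \<bar>w t\<bar> / (1 + \<bar>t\<bar>)))"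
proof -
  let ?r = "\<lambda>t. \<bar>w t\<bar> / (1 + \<bar>t\<bar>)"
  have "((\<lambda>t. w t / (1 + \<bar>t\<bar>)) \<longlongrightarrow> 0) at_infinity"
    using assms by (simp add: Omega_iff)
  then have "\<forall>\<^sub>F t in at_infinity. ?r t < 1"
    by (auto dest: tendstoD[of _ _ _ 1] simp: dist_real_def abs_divide)
  then obtain R where R: "\<And>t. R \<le> \<bar>t\<bar> \<Longrightarrow> ?r t < 1"
    by (auto simp: eventually_at_infinity)
  have "continuous_on (cball 0 R) ?r"
    using assms by (intro continuous_intros) (auto simp: Omega_iff intro: continuous_on_subset)
  then have "bdd_above (?r ` cball 0 R)"
    by (intro bounded_imp_bdd_above compact_imp_bounded compact_continuous_image) auto
  then obtain K where K: "\<And>t. \<bar>t\<bar> \<le> R \<Longrightarrow> ?r t \<le> K"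
    unfolding bdd_above_def by (metis image_eqI mem_cball_0 real_norm_def)
  show ?thesis
    by (rule bdd_aboveI2[where M="max 1 K"])
      (metis K R linorder_le_cases less_imp_le max.coboundedI1 max.coboundedI2)
qed

lemma omega_norm_le:
  assumes "\<And>x. \<bar>w x\<bar> / (1 + \<bar>x\<bar>) \<le> M"
  shows "omega_norm w \<le> M"
  unfolding omega_norm_def by (rule cSUP_least) (auto intro: assms)

lemma abs_le_omega_norm:
  assumes "w \<in> Omega"
  shows "\<bar>w x\<bar> \<le> omega_norm w * (1 + \<bar>x\<bar>)"
proof -
  have "\<bar>w x\<bar> / (1 + \<bar>x\<bar>) \<le> omega_norm w"
    unfolding omega_norm_def by (rule cSUP_upper[OF _ Omega_weighted_bounded[OF assms]]) simp
  then show ?thesis by (simp add: pos_divide_le_eq add_pos_nonneg)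
qed

lemma Omega_diff:
  assumes "f \<in> Omega" "g \<in> Omega"
  shows "(\<lambda>x. f x - g x) \<in> Omega"
  using assms tendsto_diff[of _ 0 at_infinity _ 0]
  by (auto simp: Omega_iff diff_divide_distrib intro!: continuous_intros)

lemma filterlim_one_plus_abs_at_infinity:
  "filterlim (\<lambda>x::real. 1 + \<bar>x\<bar>) at_infinity at_infinity"
  unfolding filterlim_at_infinity[OF order_refl] eventually_at_infinity
  by (metis abs_ge_self add_increasing zero_le_one order_trans real_norm_def)

lemma Omega_add_bounded:
  assumes "f \<in> Omega" "continuous_on UNIV \<psi>" "\<psi> 0 = 0" "\<And>x. \<bar>\<psi> x\<bar> \<le> M"
  shows "(\<lambda>x. f x + \<psi> x) \<in> Omega"
proof -
  have "((\<lambda>x. \<psi> x / (1 + \<bar>x\<bar>)) \<longlongrightarrow> 0) at_infinity"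
  proof (rule Lim_null_comparison)
    show "((\<lambda>x. M / (1 + \<bar>x\<bar>)) \<longlongrightarrow> 0) at_infinity"
      by (rule tendsto_divide_0[OF tendsto_const filterlim_one_plus_abs_at_infinity])
    show "\<forall>\<^sub>F x in at_infinity. norm (\<psi> x / (1 + \<bar>x\<bar>)) \<le> M / (1 + \<bar>x\<bar>)"
      using assms(4) by (simp add: abs_divide divide_right_mono)
  qed
  then show ?thesis
    using assms(1-3) tendsto_add[of _ 0 at_infinity _ 0]
    by (auto simp: Omega_iff add_divide_distrib intro!: continuous_intros)
qed

lemma omega_closure_mono: "A \<subseteq> B \<Longrightarrow> omega_closure A \<subseteq> omega_closure B"
  unfolding omega_closure_def by blast

lemma omega_closure_weighted_approx:
  assumes "f \<in> omega_closure A" "A \<subseteq> Omega" "e > 0"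
  shows "\<exists>g\<in>A. \<forall>x. \<bar>f x - g x\<bar> \<le> e * (1 + \<bar>x\<bar>)"
proof -
  obtain g where g: "g \<in> A" "omega_norm (\<lambda>x. f x - g x) < e"
    using assms(1,3) by (auto simp: omega_closure_def)
  have "(\<lambda>x. f x - g x) \<in> Omega"
    using assms(1,2) g(1) by (intro Omega_diff) (auto simp: omega_closure_def)
  then have "\<bar>f x - g x\<bar> \<le> e * (1 + \<bar>x\<bar>)" for x
    using abs_le_omega_norm[of _ x] mult_right_mono[OF less_imp_le[OF g(2)], of "1 + \<bar>x\<bar>"]
    by fastforce
  with g(1) show ?thesis by blast
qed

lemma omega_closureI_uniform:
  assumes "f \<in> Omega" "\<And>e. e > 0 \<Longrightarrow> \<exists>g\<in>A. \<forall>x. \<bar>f x - g x\<bar> \<le> e"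
  shows "f \<in> omega_closure A"
  unfolding omega_closure_def
proof (intro CollectI conjI allI impI assms(1))
  fix e :: real assume "e > 0"
  then obtain g where g: "g \<in> A" "\<And>x. \<bar>f x - g x\<bar> \<le> e / 2"
    using assms(2)[of "e / 2"] by auto
  have "\<bar>f x - g x\<bar> / (1 + \<bar>x\<bar>) \<le> \<bar>f x - g x\<bar>" for x
    by (intro mult_imp_div_pos_le) (auto simp: algebra_simps)
  then have "omega_norm (\<lambda>x. f x - g x) \<le> e / 2"
    using g(2) by (intro omega_norm_le) (rule order_trans)
  with \<open>e > 0\<close> g(1) show "\<exists>g\<in>A. omega_norm (\<lambda>x. f x - g x) < e" by force
qed

lemma tendsto_weighted_approx:
  fixes f :: "real \<Rightarrow> real"
  assumes "\<And>n x. \<bar>f x - G n x\<bar> \<le> e n * (1 + \<bar>x\<bar>)" "e \<longlonglongrightarrow> 0" "X \<longlonglongrightarrow> x" "isCont f x"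
  shows "(\<lambda>n. G n (X n)) \<longlonglongrightarrow> f x"
proof -
  have "(\<lambda>n. e n * (1 + \<bar>X n\<bar>)) \<longlonglongrightarrow> 0 * (1 + \<bar>x\<bar>)"
    by (intro tendsto_intros assms(2,3))
  then have "(\<lambda>n. e n * (1 + \<bar>X n\<bar>)) \<longlonglongrightarrow> 0" by simp
  then have "(\<lambda>n. f (X n) - G n (X n)) \<longlonglongrightarrow> 0"
    by (rule Lim_null_comparison[OF always_eventually, rotated]) (simp add: assms(1))
  moreover have "(\<lambda>n. f (X n)) \<longlonglongrightarrow> f x"
    by (rule isCont_tendsto_compose[OF assms(4,3)])
  ultimately have "(\<lambda>n. f (X n) - (f (X n) - G n (X n))) \<longlonglongrightarrow> f x - 0"
    by (intro tendsto_diff)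
  then show ?thesis by simp
qed

lemma S_t_subset_Omega: "S_t b c1 c2 t \<subseteq> Omega"
  by (auto simp: S_t_def)

lemma S_set_subset_Omega: "S_set b c1 c2 \<subseteq> Omega"
  by (auto simp: S_set_def S_t_def)

definition S_t_closed :: "real \<Rightarrow> real \<Rightarrow> real \<Rightarrow> real \<Rightarrow> (real \<Rightarrow> real) set" where
  "S_t_closed b c1 c2 t = {f \<in> Omega. \<forall>s\<in>{0<..<t}. f (-s) - f (-t) \<ge> b + c2 * t - c1 * s}"

lemma S_t_limit_ge:
  fixes f :: "real \<Rightarrow> real"
  assumes G: "\<And>n. G n \<in> S_t b c1 c2 (T n)" and T: "T \<longlonglongrightarrow> l"
    and approx: "\<And>n x. \<bar>f x - G n x\<bar> \<le> e n * (1 + \<bar>x\<bar>)" and e: "e \<longlonglongrightarrow> 0"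
    and f: "continuous_on UNIV f" and s: "s \<in> {0<..<l}"
  shows "b + c2 * l - c1 * s \<le> f (-s) - f (-l)"
proof (rule tendsto_le[OF trivial_limit_sequentially])
  have "isCont f x" for x
    using f by (simp add: continuous_on_eq_continuous_at)
  then show "(\<lambda>n. G n (-s) - G n (- T n)) \<longlonglongrightarrow> f (-s) - f (-l)"
    by (intro tendsto_diff tendsto_weighted_approx[OF approx e] tendsto_const tendsto_minus T)
  show "(\<lambda>n. b + c2 * T n - c1 * s) \<longlonglongrightarrow> b + c2 * l - c1 * s"
    by (intro tendsto_intros T)
  have "\<forall>\<^sub>F n in sequentially. s < T n"
    using order_tendstoD(1)[OF T] s by simp
  then show "\<forall>\<^sub>F n in sequentially. b + c2 * T n - c1 * s \<le> G n (-s) - G n (- T n)"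
    by eventually_elim (use G s in \<open>auto simp: S_t_def intro: less_imp_le\<close>)
qed

lemma S_t_closed_of_bounded_parameters:
  fixes f :: "real \<Rightarrow> real"
  assumes f: "f \<in> Omega" and G: "\<And>n. G n \<in> S_t b c1 c2 (T n)" and T: "\<And>n. T n \<in> {t0..B}"
    and approx: "\<And>n x. \<bar>f x - G n x\<bar> \<le> e n * (1 + \<bar>x\<bar>)" and e: "e \<longlonglongrightarrow> 0"
  shows "\<exists>l\<in>{t0..B}. f \<in> S_t_closed b c1 c2 l"
proof -
  obtain l r where l: "l \<in> {t0..B}" and r: "strict_mono r" and lim: "(T \<circ> r) \<longlonglongrightarrow> l"
    using compact_imp_seq_compact[OF compact_Icc] T unfolding seq_compact_def by metis
  have "b + c2 * l - c1 * s \<le> f (-s) - f (-l)" if "s \<in> {0<..<l}" for s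
    using G approx f that
    by (intro S_t_limit_ge[OF _ lim _ LIMSEQ_subseq_LIMSEQ[OF e r], of "G \<circ> r"])
      (auto simp: Omega_iff)
  with f have "f \<in> S_t_closed b c1 c2 l"
    by (simp add: S_t_closed_def)
  with l show ?thesis ..
qed

lemma closure_S_t_subset: "omega_closure (S_t b c1 c2 t) \<subseteq> S_t_closed b c1 c2 t"
proof
  fix f assume f: "f \<in> omega_closure (S_t b c1 c2 t)"
  then have "f \<in> Omega" by (simp add: omega_closure_def)
  have "\<forall>n. \<exists>g\<in>S_t b c1 c2 t. \<forall>x. \<bar>f x - g x\<bar> \<le> inverse (real (Suc n)) * (1 + \<bar>x\<bar>)"
    using omega_closure_weighted_approx[OF f S_t_subset_Omega] by simp
  then obtain G where "\<And>n. G n \<in> S_t b c1 c2 t"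
    and "\<And>n x. \<bar>f x - G n x\<bar> \<le> inverse (real (Suc n)) * (1 + \<bar>x\<bar>)"
    by metis
  then have "\<exists>l\<in>{t..t}. f \<in> S_t_closed b c1 c2 l"
    by (intro S_t_closed_of_bounded_parameters[OF \<open>f \<in> Omega\<close> _ _ _ LIMSEQ_inverse_real_of_nat]) auto
  then show "f \<in> S_t_closed b c1 c2 t"
    by simp
qed

lemma S_t_closed_subset_closure: "S_t_closed b c1 c2 t \<subseteq> omega_closure (S_t b c1 c2 t)"
proof
  fix f assume "f \<in> S_t_closed b c1 c2 t"
  then have f: "f \<in> Omega" and f_ge: "\<And>s. s \<in> {0<..<t} \<Longrightarrow> f (-s) - f (-t) \<ge> b + c2 * t - c1 * s"
    by (auto simp: S_t_closed_def)
  show "f \<in> omega_closure (S_t b c1 c2 t)"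
  proof (rule omega_closureI_uniform[OF f])
    fix e :: real assume "e > 0"
    define \<epsilon> where "\<epsilon> = e / (\<bar>t\<bar> + 1)"
    have "\<epsilon> > 0" and "\<epsilon> * \<bar>t\<bar> \<le> e"
      using \<open>e > 0\<close> by (auto simp: \<epsilon>_def field_simps)
    define g where "g = (\<lambda>x. f x + - (\<epsilon> * min (\<bar>x\<bar>) (\<bar>t\<bar>)))"
    have bound: "\<bar>\<epsilon> * min (\<bar>x\<bar>) (\<bar>t\<bar>)\<bar> \<le> \<epsilon> * \<bar>t\<bar>" for x
      using \<open>\<epsilon> > 0\<close> by (auto simp: abs_mult)
    have "g \<in> Omega"
      unfolding g_def by (rule Omega_add_bounded[OF f]) (use bound in \<open>auto intro!: continuous_intros\<close>)
    moreover have "g (-s) - g (-t) > b + c2 * t - c1 * s" if "s \<in> {0<..<t}" for s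
    proof -
      have "g (-s) - g (-t) = f (-s) - f (-t) + \<epsilon> * (t - s)"
        using that by (auto simp: g_def algebra_simps)
      moreover have "\<epsilon> * (t - s) > 0"
        using \<open>\<epsilon> > 0\<close> that by simp
      ultimately show ?thesis
        using f_ge[OF that] by linarith
    qed
    moreover have "\<bar>f x - g x\<bar> \<le> e" for x
      using bound[of x] \<open>\<epsilon> * \<bar>t\<bar> \<le> e\<close> by (simp add: g_def)
    ultimately show "\<exists>g\<in>S_t b c1 c2 t. \<forall>x. \<bar>f x - g x\<bar> \<le> e"
      by (auto simp: S_t_def)
  qed
qed

lemma closure_S_t: "omega_closure (S_t b c1 c2 t) = S_t_closed b c1 c2 t"
  by (intro equalityI closure_S_t_subset S_t_closed_subset_closure)

lemma S_t_approx_parameter_bounded: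
  fixes f :: "real \<Rightarrow> real"
  assumes f: "f \<in> Omega" and "c2 > 0"
  obtains B where "\<And>T g. g \<in> S_t b c1 c2 T \<Longrightarrow> s0 \<in> {0<..<T} \<Longrightarrow>
    (\<And>x. \<bar>f x - g x\<bar> \<le> c2 / 4 * (1 + \<bar>x\<bar>)) \<Longrightarrow> T \<le> B"
proof -
  have "((\<lambda>x. f x / (1 + \<bar>x\<bar>)) \<longlongrightarrow> 0) at_bot"
    using f by (simp add: Omega_def)
  then have "\<forall>\<^sub>F x in at_bot. \<bar>f x / (1 + \<bar>x\<bar>)\<bar> < c2 / 4"
    using \<open>c2 > 0\<close> by (auto dest: tendstoD[of _ _ _ "c2 / 4"] simp: dist_real_def)
  then obtain N where N_less: "\<And>x. x \<le> N \<Longrightarrow> \<bar>f x / (1 + \<bar>x\<bar>)\<bar> < c2 / 4"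
    by (auto simp: eventually_at_bot_linorder)
  have N: "\<bar>f x\<bar> \<le> c2 / 4 * (1 + \<bar>x\<bar>)" if "x \<le> N" for x
    using N_less[OF that] by (simp add: abs_divide pos_divide_less_eq add_pos_nonneg)
  \<comment> \<open>the four estimates below add up to \<open>c2 * T / 2 < K\<close>\<close>
  define K where "K = f (-s0) + c2 / 4 * (1 + \<bar>s0\<bar>) + c2 / 2 + c1 * s0 - b"
  show ?thesis
  proof (rule that[of "max (-N) (2 * K / c2)"])
    fix T g
    assume g: "g \<in> S_t b c1 c2 T" and s0: "s0 \<in> {0<..<T}"
      and approx: "\<And>x. \<bar>f x - g x\<bar> \<le> c2 / 4 * (1 + \<bar>x\<bar>)"
    show "T \<le> max (-N) (2 * K / c2)"
    proof (rule ccontr)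
      assume "\<not> ?thesis"
      then have "-T \<le> N" and "2 * K / c2 < T"
        by auto
      then have "2 * K < c2 * T"
        using \<open>c2 > 0\<close> by (simp add: pos_divide_less_eq mult.commute)
      have "b + c2 * T - c1 * s0 < g (-s0) - g (-T)"
        using g s0 by (auto simp: S_t_def)
      moreover have "g (-s0) \<le> f (-s0) + c2 / 4 * (1 + \<bar>s0\<bar>)"
        using approx[of "-s0"] unfolding abs_minus_cancel abs_le_iff by linarith
      moreover have "- g (-T) \<le> - f (-T) + c2 / 4 * (1 + T)"
      proof -
        have "\<bar>f (-T) - g (-T)\<bar> \<le> c2 / 4 * (1 + T)"
          using approx[of "-T"] s0 by simp
        then show ?thesis unfolding abs_le_iff by linarith
      qed
      moreover have "- f (-T) \<le> c2 / 4 * (1 + T)"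
        using N[OF \<open>-T \<le> N\<close>] s0 by simp
      ultimately show False
        using \<open>2 * K < c2 * T\<close> unfolding K_def by (simp add: field_simps)
    qed
  qed
qed

lemma closure_S_set_subset:
  assumes "b > 0" "c1 > c2" "c2 > 0"
  shows "omega_closure (S_set b c1 c2) \<subseteq> (\<Union>t\<in>{t_zero b c1 c2..}. omega_closure (S_t b c1 c2 t))"
proof
  fix f assume f: "f \<in> omega_closure (S_set b c1 c2)"
  define t0 where "t0 = t_zero b c1 c2"
  have "t0 > 0"
    using assms by (simp add: t0_def t_zero_def)
  have "f \<in> Omega"
    using f by (simp add: omega_closure_def)
  define e where "e n = c2 / 4 * inverse (real (Suc n))" for n
  have "e \<longlonglongrightarrow> c2 / 4 * 0"
    unfolding e_def by (intro tendsto_intros LIMSEQ_inverse_real_of_nat)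
  then have e: "e \<longlonglongrightarrow> 0" by simp
  have "e n > 0" for n
    using \<open>c2 > 0\<close> by (simp add: e_def)
  then have "\<forall>n. \<exists>g\<in>S_set b c1 c2. \<forall>x. \<bar>f x - g x\<bar> \<le> e n * (1 + \<bar>x\<bar>)"
    using omega_closure_weighted_approx[OF f S_set_subset_Omega] by blast
  then have "\<forall>n. \<exists>T G. T > t0 \<and> G \<in> S_t b c1 c2 T \<and> (\<forall>x. \<bar>f x - G x\<bar> \<le> e n * (1 + \<bar>x\<bar>))"
    unfolding S_set_def t0_def by fastforce
  then obtain T G where T: "\<And>n. T n > t0" and G: "\<And>n. G n \<in> S_t b c1 c2 (T n)"
    and approx: "\<And>n x. \<bar>f x - G n x\<bar> \<le> e n * (1 + \<bar>x\<bar>)"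
    by metis
  obtain B where B: "\<And>T g. g \<in> S_t b c1 c2 T \<Longrightarrow> t0 \<in> {0<..<T} \<Longrightarrow>
      (\<And>x. \<bar>f x - g x\<bar> \<le> c2 / 4 * (1 + \<bar>x\<bar>)) \<Longrightarrow> T \<le> B"
    using S_t_approx_parameter_bounded[OF \<open>f \<in> Omega\<close> \<open>c2 > 0\<close>] by blast
  have "e n \<le> c2 / 4" for n
    using \<open>c2 > 0\<close> by (simp add: e_def mult_left_le inverse_le_1_iff)
  then have "\<bar>f x - G n x\<bar> \<le> c2 / 4 * (1 + \<bar>x\<bar>)" for n x
    by (meson approx abs_ge_zero add_increasing order_trans mult_right_mono zero_le_one)
  then have "T n \<in> {t0..B}" for n
    using \<open>t0 > 0\<close> T B[OF G] by (auto intro: less_imp_le)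
  then obtain l where "l \<in> {t0..B}" and "f \<in> S_t_closed b c1 c2 l"
    using S_t_closed_of_bounded_parameters[OF \<open>f \<in> Omega\<close> G _ approx e] by blast
  then show "f \<in> (\<Union>t\<in>{t_zero b c1 c2..}. omega_closure (S_t b c1 c2 t))"
    unfolding closure_S_t t0_def by auto
qed

text \<open>On \<open>[-(a + h), -a]\<close> the patched function is the line of slope \<open>c\<close> through \<open>(-a, f (-a))\<close>;
  to the right of \<open>-a\<close> it is \<open>f\<close>, and to the left it is \<open>f\<close> shifted by a constant.\<close>

definition ramp_patch :: "real \<Rightarrow> real \<Rightarrow> real \<Rightarrow> (real \<Rightarrow> real) \<Rightarrow> real \<Rightarrow> real" where
  "ramp_patch c a h f x =
     (let y = max (-(a + h)) (min (-a) x) in f x + (f (-a) - f y) - c * (-a - y))"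

lemma ramp_patch_eq_right: "0 \<le> h \<Longrightarrow> -a \<le> x \<Longrightarrow> ramp_patch c a h f x = f x"
  by (simp add: ramp_patch_def)

lemma ramp_patch_eq_line:
  "-(a + h) \<le> x \<Longrightarrow> x \<le> -a \<Longrightarrow> ramp_patch c a h f x = f (-a) - c * (-a - x)"
  by (simp add: ramp_patch_def)

lemma ramp_patch_close:
  assumes "0 \<le> c" "0 \<le> h" "\<And>y. -(a + h) \<le> y \<Longrightarrow> y \<le> -a \<Longrightarrow> \<bar>f y - f (-a)\<bar> \<le> \<epsilon>"
  shows "\<bar>f x - ramp_patch c a h f x\<bar> \<le> \<epsilon> + c * h"
proof -
  define y where "y = max (-(a + h)) (min (-a) x)"
  have "-(a + h) \<le> y" "y \<le> -a"
    using assms(2) by (auto simp: y_def)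
  then have "\<bar>f y - f (-a)\<bar> \<le> \<epsilon>" and "0 \<le> c * (-a - y)" and "c * (-a - y) \<le> c * h"
    using assms by (auto intro: mult_left_mono)
  moreover have "f x - ramp_patch c a h f x = (f y - f (-a)) + c * (-a - y)"
    by (simp add: ramp_patch_def y_def Let_def)
  ultimately show ?thesis
    unfolding abs_le_iff by linarith
qed

lemma ramp_patch_uniform_approx:
  assumes f: "continuous_on UNIV f" and "0 \<le> c" "0 < e"
  obtains h where "h > 0" "\<And>x. \<bar>f x - ramp_patch c a h f x\<bar> \<le> e"
proof -
  obtain \<delta> where "\<delta> > 0" and \<delta>: "\<And>y. dist y (-a) < \<delta> \<Longrightarrow> dist (f y) (f (-a)) < e / 2"
    using f \<open>e > 0\<close> unfolding continuous_on_iff by (metis UNIV_I half_gt_zero)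
  define h where "h = min (\<delta> / 2) (e / (2 * (c + 1)))"
  have "h > 0" and "h < \<delta>"
    using \<open>\<delta> > 0\<close> \<open>e > 0\<close> \<open>0 \<le> c\<close> by (simp_all add: h_def)
  have "c * h \<le> (c + 1) * (e / (2 * (c + 1)))"
    using \<open>h > 0\<close> \<open>0 \<le> c\<close> by (intro mult_mono) (auto simp: h_def)
  also have "\<dots> = e / 2"
    using \<open>0 \<le> c\<close> by (simp add: field_simps)
  finally have "c * h \<le> e / 2" .
  have "\<bar>f y - f (-a)\<bar> \<le> e / 2" if "-(a + h) \<le> y" "y \<le> -a" for y
  proof -
    have "dist y (-a) < \<delta>"
      using that \<open>h < \<delta>\<close> by (simp add: dist_real_def)
    then show ?thesis
      using \<delta> by (simp add: dist_real_def less_imp_le)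
  qed
  then have "\<bar>f x - ramp_patch c a h f x\<bar> \<le> e" for x
    using ramp_patch_close[of c h a f "e / 2" x] \<open>h > 0\<close> \<open>c * h \<le> e / 2\<close> \<open>0 \<le> c\<close> by simp
  with \<open>h > 0\<close> show ?thesis
    by (rule that)
qed

lemma ramp_patch_Omega:
  assumes f: "f \<in> Omega" and "0 \<le> a" "0 \<le> h"
  shows "ramp_patch c a h f \<in> Omega"
proof -
  define y where "y x = max (-(a + h)) (min (-a) x)" for x
  define \<phi> where "\<phi> z = f (-a) - f z - c * (-a - z)" for z
  have f_cont: "continuous_on UNIV f"
    using f by (simp add: Omega_def)
  have "continuous_on {-(a + h)..-a} \<phi>"
    unfolding \<phi>_def by (intro continuous_intros continuous_on_subset[OF f_cont]) auto
  then have "bounded (\<phi> ` {-(a + h)..-a})"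
    by (intro compact_imp_bounded compact_continuous_image compact_Icc)
  then obtain M where M: "\<And>z. z \<in> {-(a + h)..-a} \<Longrightarrow> \<bar>\<phi> z\<bar> \<le> M"
    by (metis bounded_iff imageI real_norm_def)
  have "y x \<in> {-(a + h)..-a}" for x
    using assms by (auto simp: y_def)
  then have bound: "\<bar>\<phi> (y x)\<bar> \<le> M" for x
    by (rule M)
  have "continuous_on UNIV (\<lambda>x. \<phi> (y x))"
    unfolding \<phi>_def y_def
    by (intro continuous_intros continuous_on_compose2[OF f_cont]) auto
  moreover have "\<phi> (y 0) = 0"
    using assms by (simp add: \<phi>_def y_def)
  moreover have "ramp_patch c a h f = (\<lambda>x. f x + \<phi> (y x))"
    by (simp add: fun_eq_iff ramp_patch_def Let_def \<phi>_def y_def)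
  ultimately show ?thesis
    using Omega_add_bounded[OF f _ _ bound] by simp
qed

lemma ramp_patch_in_S_t:
  assumes "c2 < c1" "0 < h" "0 \<le> a" "b = (c1 - c2) * a" and f: "f \<in> S_t_closed b c1 c2 a"
  shows "ramp_patch c1 a h f \<in> S_t b c1 c2 (a + h)"
proof -
  let ?g = "ramp_patch c1 a h f"
  have "c2 * h < c1 * h"
    using assms(1,2) by simp
  have g_end: "?g (-(a + h)) = f (-a) - c1 * h"
    using assms(2) by (simp add: ramp_patch_eq_line)
  have "b + c2 * (a + h) - c1 * s < ?g (-s) - ?g (-(a + h))" if s: "s \<in> {0<..<a + h}" for s
  proof (cases "s < a")
    case True
    then have "?g (-s) = f (-s)"
      using assms(2) by (simp add: ramp_patch_eq_right)
    moreover have "b + c2 * a - c1 * s \<le> f (-s) - f (-a)"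
      using f True s by (simp add: S_t_closed_def)
    ultimately show ?thesis
      using g_end \<open>c2 * h < c1 * h\<close> by (simp add: algebra_simps)
  next
    case False
    then have "?g (-s) = f (-a) - c1 * (s - a)"
      using s by (simp add: ramp_patch_eq_line)
    with g_end assms(4) \<open>c2 * h < c1 * h\<close> show ?thesis
      by (simp add: algebra_simps)
  qed
  moreover have "?g \<in> Omega"
    using f assms(2,3) by (intro ramp_patch_Omega) (auto simp: S_t_closed_def)
  ultimately show ?thesis
    using assms(2) by (auto simp: S_t_def)
qed

lemma closure_S_t_zero_subset:
  assumes "0 \<le> b" "c2 < c1" "0 < c2"
  shows "omega_closure (S_t b c1 c2 (t_zero b c1 c2)) \<subseteq> omega_closure (S_set b c1 c2)"
proof
  define t0 where "t0 = t_zero b c1 c2"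
  have "0 \<le> t0" and b: "b = (c1 - c2) * t0"
    using assms by (simp_all add: t0_def t_zero_def)
  fix f assume "f \<in> omega_closure (S_t b c1 c2 (t_zero b c1 c2))"
  then have f: "f \<in> S_t_closed b c1 c2 t0"
    by (simp add: closure_S_t t0_def)
  then have "f \<in> Omega"
    by (simp add: S_t_closed_def)
  show "f \<in> omega_closure (S_set b c1 c2)"
  proof (rule omega_closureI_uniform[OF \<open>f \<in> Omega\<close>])
    fix e :: real assume "e > 0"
    obtain h where "h > 0" and close: "\<And>x. \<bar>f x - ramp_patch c1 t0 h f x\<bar> \<le> e"
      using ramp_patch_uniform_approx[of f c1 e t0] \<open>f \<in> Omega\<close> \<open>e > 0\<close> assms
      by (auto simp: Omega_def)
    have "ramp_patch c1 t0 h f \<in> S_set b c1 c2"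
      using ramp_patch_in_S_t[OF assms(2) \<open>h > 0\<close> \<open>0 \<le> t0\<close> b f] \<open>h > 0\<close>
      unfolding S_set_def t0_def by force
    with close show "\<exists>g\<in>S_set b c1 c2. \<forall>x. \<bar>f x - g x\<bar> \<le> e"
      by blast
  qed
qed

lemma closure_S_t_subset_closure_S_set:
  assumes "0 \<le> b" "c2 < c1" "0 < c2" "t_zero b c1 c2 \<le> t"
  shows "omega_closure (S_t b c1 c2 t) \<subseteq> omega_closure (S_set b c1 c2)"
proof (cases "t = t_zero b c1 c2")
  case True
  with closure_S_t_zero_subset[OF assms(1-3)] show ?thesis by simp
next
  case False
  with assms(4) have "S_t b c1 c2 t \<subseteq> S_set b c1 c2"
    unfolding S_set_def by (intro UN_upper) simp
  then show ?thesis by (rule omega_closure_mono)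
qed

theorem lemmaA1:
  fixes b c1 c2 :: real
  assumes "b > 0" and "c1 > c2" and "c2 > 0"
  shows "(\<forall>t\<ge>t_zero b c1 c2. omega_closure (S_t b c1 c2 t) =
            {f \<in> Omega. \<forall>s\<in>{0<..<t}. f (-s) - f (-t) \<ge> b + c2 * t - c1 * s})
       \<and> omega_closure (S_set b c1 c2) = (\<Union>t\<in>{t_zero b c1 c2..}. omega_closure (S_t b c1 c2 t))"
proof
  show "\<forall>t\<ge>t_zero b c1 c2. omega_closure (S_t b c1 c2 t) =
          {f \<in> Omega. \<forall>s\<in>{0<..<t}. f (-s) - f (-t) \<ge> b + c2 * t - c1 * s}"
    by (simp add: closure_S_t S_t_closed_def)
  show "omega_closure (S_set b c1 c2) = (\<Union>t\<in>{t_zero b c1 c2..}. omega_closure (S_t b c1 c2 t))"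
    using assms
    by (intro equalityI closure_S_set_subset UN_least closure_S_t_subset_closure_S_set) auto
qed

end
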